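(* For every positive integer $m$, the exponential generating function $\sum_{n\ge0}a_m(n)x^n/n!$, where $a_m(n)$ is the number of permutations of $[n]$ in which every alternating run has length less than $m$, equals \[ \left[\sum_{n=0}^{\infty}\left(E_{mn}\frac{x^{mn}}{(mn)!}-E_{mn+1}\frac{x^{mn+1}}{(mn+1)!}\right)\right]^{-1}. \]
   Context: For $\pi\in\mathfrak S_n$, $i\in[n-1]$ is an alternating descent if $i$ odd and $\pi_i>\pi_{i+1}$, or $i$ even and $\pi_i<\pi_{i+1}$. An alternating run is a maximal block of consecutive entries containing no alternating descent (i.e. no $i$ with both $i,i+1$ in the block is an alternating descent). $a_m(0)=1$. $E_n$: $\sum E_nx^n/n!=\sec x+\tan x$. *)

theory Defs
  imports Complex_Main "HOL-Computational_Algebra.Formal_Power_Series"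
begin

definition euler_num :: "nat \<Rightarrow> real" where
  "euler_num n = fact n * fps_nth (inverse (fps_cos (1::real)) + fps_tan 1) n"

(* A permutation pi of [n] is a list xs with distinct entries and set xs = {1..n};
   pi_i = xs ! (i - 1) (1-indexed). *)
definition alt_desc :: "nat list \<Rightarrow> nat \<Rightarrow> bool" where
  "alt_desc xs i \<longleftrightarrow> 1 \<le> i \<and> i < length xs \<and>
     ((odd i \<and> xs ! (i - 1) > xs ! i) \<or> (even i \<and> xs ! (i - 1) < xs ! i))"

definition desc_free_block :: "nat list \<Rightarrow> nat \<Rightarrow> nat \<Rightarrow> bool" where
  "desc_free_block xs a b \<longleftrightarrow> 1 \<le> a \<and> a \<le> b \<and> b \<le> length xs \<and>
     (\<forall>j. a \<le> j \<and> j < b \<longrightarrow> \<not> alt_desc xs j)"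

definition alt_run :: "nat list \<Rightarrow> nat \<Rightarrow> nat \<Rightarrow> bool" where
  "alt_run xs a b \<longleftrightarrow> desc_free_block xs a b \<and>
     (\<forall>a' b'. desc_free_block xs a' b' \<and> a' \<le> a \<and> b \<le> b' \<longrightarrow> a' = a \<and> b' = b)"

definition a_count :: "nat \<Rightarrow> nat \<Rightarrow> nat" where
  "a_count m n = card {xs. distinct xs \<and> set xs = {1..n} \<and>
     (\<forall>a b. alt_run xs a b \<longrightarrow> b - a + 1 < m)}"

end

theory Submission
  imports Defs "HOL-Combinatorics.Multiset_Permutations"
begin

(* From sec + tan we get the convolution identities of the E_n, and hence the
      identity that half of a binomial convolution, restricted by parity, gives E_(n+1).
   2. Andre's theorem.  Alternating arrangements (of either parity) of a k-set number E_k: split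
      an arrangement at its maximum and use the parity convolution.
   3. The sieve.  "All runs shorter than m" means every window of m consecutive entries contains
      an alternating descent.  A signed weight, defined by cutting off an alternating first block
      of length k with coefficient [m | k-1] - [m | k], equals the indicator of this condition,
      because the coefficients telescope along the first maximal block.
   4. Summing the weight over all arrangements of an n-set and counting the first blocks by
      Andre's theorem gives the coefficient recurrence of 1/D_m.
   5. Runs versus windows, and the main theorem as a short consequence. *)

unbundle fps_syntax

definition euler_gf :: "real fps" where
  "euler_gf = inverse (fps_cos 1) + fps_tan 1"

lemma euler_num_conv_gf: "euler_num n = fact n * euler_gf $ n"
  by (simp add: euler_num_def euler_gf_def)

(* cos has constant term 1, so it can be cancelled from identities between power series. *)
lemma fps_cos_nonzero: "fps_cos (1::real) \<noteq> 0"
  by (metis fps_cos_nth_0 fps_zero_nth one_neq_zero)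

lemma euler_gf_mult_cos: "euler_gf * fps_cos 1 = 1 + fps_sin 1"
proof -
  have c0: "fps_cos (1::real) $ 0 \<noteq> 0" by simp
  have "fps_tan (1::real) = fps_sin 1 * inverse (fps_cos 1)"
    unfolding fps_tan_def using c0 by (rule fps_divide_unit)
  thus ?thesis using inverse_mult_eq_1[OF c0]
    by (simp add: euler_gf_def algebra_simps)
qed

lemma euler_gf_deriv: "2 * fps_deriv euler_gf = 1 + euler_gf ^ 2"
proof -
  let ?E = euler_gf and ?C = "fps_cos (1::real)" and ?S = "fps_sin (1::real)"
  have "fps_deriv (?E * ?C) = fps_deriv (1 + ?S)"
    by (simp only: euler_gf_mult_cos)
  hence deriv: "fps_deriv ?E * ?C = ?C + ?E * ?S"
    by (simp add: fps_sin_deriv fps_cos_deriv algebra_simps flip: fps_const_neg)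
  have "(2 * fps_deriv ?E) * ?C^2 = 2 * ?C * (fps_deriv ?E * ?C)"
    by (simp add: power2_eq_square algebra_simps)
  also have "\<dots> = 2 * ?C * (?C + ?E * ?S)"
    by (simp only: deriv)
  also have "\<dots> = 2 * ?C^2 + 2 * ?S * (?E * ?C)"
    by (simp add: power2_eq_square algebra_simps)
  also have "\<dots> = ?C^2 + (?C^2 + ?S^2) + 2 * ?S + ?S^2"
    by (simp add: euler_gf_mult_cos power2_eq_square algebra_simps)
  also have "\<dots> = ?C^2 + (?E * ?C)^2"
    using fps_sin_cos_sum_of_squares[of "1::real"]
    by (simp add: euler_gf_mult_cos power2_eq_square algebra_simps)
  also have "\<dots> = (1 + ?E^2) * ?C^2"
    by (simp add: power2_eq_square algebra_simps)
  finally show ?thesis using fps_cos_nonzero by simp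
qed

(* E(-x) E(x) = 1, because (1 - sin)(1 + sin) = cos^2; it gives the alternating convolution. *)
lemma euler_gf_reflect: "(euler_gf oo - fps_X) * euler_gf = 1"
proof -
  let ?E = euler_gf and ?C = "fps_cos (1::real)" and ?S = "fps_sin (1::real)"
  have X0: "(- fps_X :: real fps) $ 0 = 0" by simp
  have "?C oo - fps_X = ?C" "?S oo - fps_X = - ?S"
    by (simp_all add: fps_compose_uminus' fps_eq_iff fps_cos_def fps_sin_def)
  hence "(?E oo - fps_X) * ?C = 1 - ?S"
    using arg_cong[OF euler_gf_mult_cos, of "\<lambda>f. f oo - fps_X"]
    by (simp add: fps_compose_mult_distrib[OF X0] fps_compose_add_distrib)
  hence "((?E oo - fps_X) * ?E) * ?C^2 = (1 - ?S) * (1 + ?S)"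
    by (simp flip: euler_gf_mult_cos add: power2_eq_square ac_simps)
  also have "\<dots> = 1 * ?C^2"
    using fps_sin_cos_sum_of_squares[of 1] by (simp add: power2_eq_square algebra_simps)
  finally show ?thesis using fps_cos_nonzero by simp
qed

lemma fact_fps_mult_nth:
  fixes f g :: "real fps"
  shows "fact n * (f * g) $ n =
    (\<Sum>i=0..n. real (n choose i) * (fact i * f $ i) * (fact (n - i) * g $ (n - i)))"
  unfolding fps_mult_nth sum_distrib_left
  by (intro sum.cong refl) (simp add: binomial_fact field_simps)

lemma euler_num_0: "euler_num 0 = 1"
  by (simp add: euler_num_conv_gf euler_gf_def fps_tan_def fps_divide_unit)

lemma euler_num_1: "euler_num 1 = 1"
proof -
  have "(2 * fps_deriv euler_gf) $ 0 = (1 + euler_gf ^ 2) $ 0"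
    by (simp only: euler_gf_deriv)
  thus ?thesis using euler_num_0 by (simp add: euler_num_conv_gf power2_eq_square)
qed

(* The coefficient of x^n in 2E' = 1 + E^2. *)
lemma euler_convolution:
  assumes "n \<ge> 1"
  shows "(\<Sum>i=0..n. real (n choose i) * euler_num i * euler_num (n - i)) = 2 * euler_num (Suc n)"
proof -
  have "(2 * fps_deriv euler_gf) $ n = (1 + euler_gf ^ 2) $ n"
    by (simp only: euler_gf_deriv)
  hence "fact n * (euler_gf * euler_gf) $ n = 2 * (fact n * of_nat (Suc n) * euler_gf $ Suc n)"
    using assms by (simp add: power2_eq_square numeral_fps_const)
  thus ?thesis
    by (simp only: fact_fps_mult_nth euler_num_conv_gf fact_Suc of_nat_mult) (simp add: ac_simps)
qed

(* The coefficient of x^n in E(-x) E(x) = 1. *)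
lemma euler_alternating_convolution:
  assumes "n \<ge> 1"
  shows "(\<Sum>i=0..n. (-1)^i * (real (n choose i) * euler_num i * euler_num (n - i))) = 0"
proof -
  have "fact n * ((euler_gf oo - fps_X) * euler_gf) $ n = 0"
    using assms by (simp add: euler_gf_reflect)
  thus ?thesis
    by (simp only: fact_fps_mult_nth) (simp add: fps_compose_uminus' euler_num_conv_gf ac_simps)
qed

(* Half the sum (or difference) of the two identities above keeps exactly the terms with i + 1 + p
   even.  This is the recurrence satisfied by the numbers of alternating arrangements. *)
lemma euler_parity_convolution:
  assumes "n \<ge> 1"
  shows "(\<Sum>i=0..n. real (n choose i) * (of_bool (even (i + 1 + p)) * euler_num i * euler_num (n - i)))
    = euler_num (Suc n)"
proof -
  let ?c = "\<lambda>i. real (n choose i) * euler_num i * euler_num (n - i)"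
  have summand: "real (n choose i) * (of_bool (even (i + 1 + p)) * euler_num i * euler_num (n - i)) =
      (?c i - (-1)^p * ((-1)^i * ?c i)) / 2" for i
    by (cases "even (i + p)") (auto simp: power_add[symmetric] algebra_simps)
  have "(\<Sum>i=0..n. real (n choose i) * (of_bool (even (i + 1 + p)) * euler_num i * euler_num (n - i)))
      = ((\<Sum>i=0..n. ?c i) - (-1)^p * (\<Sum>i=0..n. (-1)^i * ?c i)) / 2"
    by (simp only: summand sum_divide_distrib[symmetric] sum_subtractf sum_distrib_left)
  thus ?thesis
    using euler_convolution[OF assms] euler_alternating_convolution[OF assms] by simp
qed

(* Position i (1 <= i < length xs, comparing the i-th and (i+1)-st entries) breaks the
   alternating pattern of parity p: the pattern asks for an ascent when i + p is odd and for a
   descent when i + p is even.  For p = 0 the breaks are exactly the alternating descents. *)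
definition alt_break :: "nat \<Rightarrow> nat list \<Rightarrow> nat \<Rightarrow> bool" where
  "alt_break p xs i \<longleftrightarrow> 1 \<le> i \<and> i < length xs \<and>
     ((odd (i + p) \<and> xs ! (i - 1) > xs ! i) \<or> (even (i + p) \<and> xs ! (i - 1) < xs ! i))"

(* An alternating list of parity p has no break; for p = 0 these are x_1 < x_2 > x_3 < ... *)
definition alternating :: "nat \<Rightarrow> nat list \<Rightarrow> bool" where
  "alternating p xs \<longleftrightarrow> (\<forall>i. \<not> alt_break p xs i)"

lemma alt_break_bounds: "alt_break p xs i \<Longrightarrow> 1 \<le> i \<and> i < length xs"
  by (simp add: alt_break_def)

lemma alt_break_take: "alt_break p (take k xs) i \<longleftrightarrow> i < k \<and> alt_break p xs i"
  unfolding alt_break_def by auto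

lemma alt_break_drop: "alt_break (p + k) (drop k xs) j \<longleftrightarrow> 1 \<le> j \<and> alt_break p xs (j + k)"
  unfolding alt_break_def
  by (cases "k \<le> length xs") (auto simp: nth_drop algebra_simps Suc_diff_le)

lemma alt_break_around_max:
  assumes "\<forall>x\<in>set l. x < M" "\<forall>x\<in>set r. x < M"
  shows "alt_break p (l @ M # r) i \<longleftrightarrow>
    (i < length l \<and> alt_break p l i) \<or>
    (i = length l \<and> l \<noteq> [] \<and> even (length l + p)) \<or>
    (i = Suc (length l) \<and> r \<noteq> [] \<and> odd (Suc (length l) + p)) \<or>
    (Suc (length l) < i \<and> alt_break (p + Suc (length l)) r (i - Suc (length l)))"
proof -
  have "l ! (length l - 1) < M" if "l \<noteq> []" using assms(1) that by (simp add: last_conv_nth[symmetric])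
  moreover have "r ! 0 < M" if "r \<noteq> []" using assms(2) that by simp
  ultimately show ?thesis
    unfolding alt_break_def
    by (cases "l = []"; cases "i < length l"; cases "i = length l"; cases "i = Suc (length l)")
       (auto simp: nth_append algebra_simps Suc_diff_Suc Suc_le_eq)
qed

lemma all_nat_split_around:
  "(\<forall>i. P i) \<longleftrightarrow> (\<forall>i<a. P i) \<and> P a \<and> P (Suc a) \<and> (\<forall>j\<ge>1. P (j + Suc a))"
proof (intro iffI allI)
  fix i assume "(\<forall>i<a. P i) \<and> P a \<and> P (Suc a) \<and> (\<forall>j\<ge>1. P (j + Suc a))"
  moreover have "i < a \<or> i = a \<or> i = Suc a \<or> (i - Suc a \<ge> 1 \<and> i = (i - Suc a) + Suc a)"
    by linarith
  ultimately show "P i" by metis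
qed simp

lemma alternating_around_max:
  assumes "\<forall>x\<in>set l. x < M" "\<forall>x\<in>set r. x < M" "l \<noteq> [] \<or> r \<noteq> []"
  shows "alternating p (l @ M # r) \<longleftrightarrow>
    even (length l + 1 + p) \<and> alternating p l \<and> alternating (p + length l + 1) r"
proof -
  let ?xs = "l @ M # r" and ?n = "Suc (length l)"
  note around = alt_break_around_max[OF assms(1,2), of p]
  have left: "alt_break p ?xs i \<longleftrightarrow> alt_break p l i" if "i < length l" for i
    using that by (simp add: around)
  have mid: "\<not> alt_break p ?xs (length l) \<and> \<not> alt_break p ?xs ?n \<longleftrightarrow> even (length l + 1 + p)"
    using assms(3) by (auto simp: around)
  have right: "alt_break p ?xs (j + ?n) \<longleftrightarrow> alt_break (p + ?n) r j" if "1 \<le> j" for j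
    using that by (simp add: around)
  have "alternating p ?xs \<longleftrightarrow>
      (\<forall>i<length l. \<not> alt_break p ?xs i) \<and> \<not> alt_break p ?xs (length l) \<and>
      \<not> alt_break p ?xs ?n \<and> (\<forall>j\<ge>1. \<not> alt_break p ?xs (j + ?n))"
    unfolding alternating_def by (rule all_nat_split_around)
  also have "\<dots> \<longleftrightarrow> even (length l + 1 + p) \<and> alternating p l \<and> alternating (p + length l + 1) r"
    unfolding alternating_def using left mid right alt_break_bounds[of p l] alt_break_bounds[of "p + ?n" r]
    by (metis Suc_eq_plus1 add.assoc)
  finally show ?thesis .
qed

lemma sum_Sigma_product:
  assumes "finite I" "\<And>L. L \<in> I \<Longrightarrow> finite (P L)" "\<And>L. L \<in> I \<Longrightarrow> finite (Q L)"
  shows "(\<Sum>L\<in>I. \<Sum>l\<in>P L. \<Sum>r\<in>Q L. g L l r) =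
         (\<Sum>(L, l, r)\<in>(SIGMA L:I. P L \<times> Q L). g L l r)"
  using assms by (simp add: sum.cartesian_product sum.Sigma split_beta)

lemma sum_permutations_split_at:
  assumes "finite B" "M \<notin> B"
  shows "(\<Sum>xs\<in>permutations_of_set (insert M B). f xs) =
    (\<Sum>L\<in>Pow B. \<Sum>l\<in>permutations_of_set L. \<Sum>r\<in>permutations_of_set (B - L). f (l @ M # r))"
proof -
  let ?S = "SIGMA L:Pow B. permutations_of_set L \<times> permutations_of_set (B - L)"
  let ?g = "\<lambda>(L, l, r). l @ M # r"
  have "L = L' \<and> l = l' \<and> r = r'"
    if "(L, l, r) \<in> ?S" "(L', l', r') \<in> ?S" "l @ M # r = l' @ M # r'" for L l r L' l' r'
  proof -
    have "M \<notin> set l" "M \<notin> set r"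
      using that(1) assms(2) by (auto simp: permutations_of_set_def)
    thus ?thesis using that by (simp add: append_Cons_eq_iff permutations_of_set_def)
  qed
  hence inj: "inj_on ?g ?S" by (auto simp: inj_on_def)
  have img:  "?g ` ?S = permutations_of_set (insert M B)"
  proof
    show "?g ` ?S \<subseteq> permutations_of_set (insert M B)"
      using assms(2) by (auto simp: permutations_of_set_def)
    show "permutations_of_set (insert M B) \<subseteq> ?g ` ?S"
    proof
      fix xs assume xs: "xs \<in> permutations_of_set (insert M B)"
      then obtain l r where lr: "xs = l @ M # r"
        by (metis insertI1 permutations_of_setD(1) split_list)
      hence "(set l, l, r) \<in> ?S"
        using xs assms(2) by (auto simp: permutations_of_set_def)
      thus "xs \<in> ?g ` ?S" by (rule image_eqI[rotated]) (simp add: lr)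
    qed
  qed
  have "sum f (permutations_of_set (insert M B)) = (\<Sum>(L, l, r)\<in>?S. f (l @ M # r))"
    by (rule sum.reindex_cong[OF inj img[symmetric]]) auto
  also have "\<dots> = (\<Sum>L\<in>Pow B. \<Sum>l\<in>permutations_of_set L. \<Sum>r\<in>permutations_of_set (B - L). f (l @ M # r))"
    using assms(1) by (intro sum_Sigma_product[symmetric]) auto
  finally show ?thesis .
qed

lemma sum_permutations_split_prefix:
  assumes "finite A" "k \<le> card A"
  shows "(\<Sum>xs\<in>permutations_of_set A. f xs) =
    (\<Sum>C | C \<subseteq> A \<and> card C = k. \<Sum>ys\<in>permutations_of_set C. \<Sum>zs\<in>permutations_of_set (A - C). f (ys @ zs))"
proof -
  let ?S = "SIGMA C:{C. C \<subseteq> A \<and> card C = k}. permutations_of_set C \<times> permutations_of_set (A - C)"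
  let ?g = "\<lambda>(C, ys, zs). ys @ zs"
  have inj: "inj_on ?g ?S"
    by (auto simp: inj_on_def length_finite_permutations_of_set permutations_of_set_def)
  have img: "?g ` ?S = permutations_of_set A"
  proof
    show "?g ` ?S \<subseteq> permutations_of_set A"
      by (auto simp: permutations_of_set_def)
    show "permutations_of_set A \<subseteq> ?g ` ?S"
    proof
      fix xs assume xs: "xs \<in> permutations_of_set A"
      hence "distinct xs" "set xs = A" "length xs = card A"
        by (auto simp: permutations_of_set_def length_finite_permutations_of_set)
      moreover have "set (drop k xs) = A - set (take k xs)"
      proof -
        have "set (take k xs) \<union> set (drop k xs) = A"
          using \<open>set xs = A\<close> by (metis append_take_drop_id set_append)
        moreover have "set (take k xs) \<inter> set (drop k xs) = {}"
          using \<open>distinct xs\<close> by (metis append_take_drop_id distinct_append)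
        ultimately show ?thesis by blast
      qed
      ultimately have "(set (take k xs), take k xs, drop k xs) \<in> ?S"
        using assms(2) by (auto simp: permutations_of_set_def distinct_card dest: in_set_takeD)
      thus "xs \<in> ?g ` ?S" by (rule image_eqI[rotated]) simp
    qed
  qed
  have "sum f (permutations_of_set A) = (\<Sum>(C, ys, zs)\<in>?S. f (ys @ zs))"
    by (rule sum.reindex_cong[OF inj img[symmetric]]) auto
  also have "\<dots> = (\<Sum>C | C \<subseteq> A \<and> card C = k. \<Sum>ys\<in>permutations_of_set C. \<Sum>zs\<in>permutations_of_set (A - C). f (ys @ zs))"
    using assms(1) by (intro sum_Sigma_product[symmetric]) (auto intro: finite_subset)
  finally show ?thesis .
qed

definition alt_count :: "nat \<Rightarrow> nat set \<Rightarrow> real" where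
  "alt_count p C = (\<Sum>xs\<in>permutations_of_set C. of_bool (alternating p xs))"

lemma alt_count_split_max:
  assumes "finite C" "card C \<ge> 2"
  defines "B \<equiv> C - {Max C}"
  shows "alt_count p C = (\<Sum>L\<in>Pow B.
    of_bool (even (card L + 1 + p)) * (alt_count p L * alt_count (p + card L + 1) (B - L)))"
proof -
  define M where "M = Max C"
  have "M \<in> C" using assms(1,2) unfolding M_def by (intro Max_in) auto
  hence C: "C = insert M B" "M \<notin> B" "finite B"
    using assms(1) by (auto simp: B_def M_def)
  have below: "\<forall>x\<in>B. x < M"
    using assms(1) by (auto simp: B_def M_def order.strict_iff_order)
  have "B \<noteq> {}" using assms(2) C by auto
  have split: "of_bool (alternating p (l @ M # r)) = of_bool (even (card L + 1 + p)) *
      of_bool (alternating p l) * (of_bool (alternating (p + card L + 1) r) :: real)"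
    if "L \<subseteq> B" "l \<in> permutations_of_set L" "r \<in> permutations_of_set (B - L)" for L l r
  proof -
    have "set l \<union> set r = B" "length l = card L"
      using that by (auto simp: permutations_of_set_def length_finite_permutations_of_set)
    thus ?thesis
      using alternating_around_max[of l M r p] below \<open>B \<noteq> {}\<close> by auto
  qed
  show ?thesis
    unfolding alt_count_def C(1) sum_permutations_split_at[OF C(3,2)]
  proof (intro sum.cong refl)
    fix L assume "L \<in> Pow B"
    hence "(\<Sum>l\<in>permutations_of_set L. \<Sum>r\<in>permutations_of_set (B - L).
        of_bool (alternating p (l @ M # r))) =
      (\<Sum>l\<in>permutations_of_set L. \<Sum>r\<in>permutations_of_set (B - L).
        of_bool (even (card L + 1 + p)) * of_bool (alternating p l) *
        (of_bool (alternating (p + card L + 1) r) :: real))"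
      by (intro sum.cong refl split) auto
    also have "\<dots> = of_bool (even (card L + 1 + p)) *
        ((\<Sum>l\<in>permutations_of_set L. of_bool (alternating p l)) *
         (\<Sum>r\<in>permutations_of_set (B - L). of_bool (alternating (p + card L + 1) r)))"
      unfolding sum_product by (simp only: sum_distrib_left mult.assoc)
    finally show "(\<Sum>l\<in>permutations_of_set L. \<Sum>r\<in>permutations_of_set (B - L).
        of_bool (alternating p (l @ M # r))) = \<dots>" .
  qed
qed

lemma sum_Pow_by_card:
  assumes "finite B"
  shows "(\<Sum>L\<in>Pow B. h (card L)) = (\<Sum>i=0..card B. real (card B choose i) * h i)"
proof -
  have "(\<Sum>L\<in>Pow B. h (card L)) = (\<Sum>i=0..card B. \<Sum>L | L \<subseteq> B \<and> card L = i. h (card L))"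
    using assms by (subst sum.group[of "Pow B" "{0..card B}" card, symmetric])
      (auto intro: card_mono intro!: sum.cong)
  also have "\<dots> = (\<Sum>i=0..card B. real (card B choose i) * h i)"
    by (intro sum.cong refl) (simp add: n_subsets[OF assms])
  finally show ?thesis .
qed

theorem alt_count_euler: "finite C \<Longrightarrow> alt_count p C = euler_num (card C)"
proof (induction "card C" arbitrary: C p rule: less_induct)
  case less
  consider "card C = 0" | "card C = 1" | "card C \<ge> 2"
    by linarith
  thus ?case
  proof cases
    case 1
    hence "C = {}" using less.prems by simp
    thus ?thesis by (simp add: alt_count_def alternating_def alt_break_def euler_num_0)
  next
    case 2
    then obtain x where "C = {x}" by (rule card_1_singletonE)
    thus ?thesis using euler_num_1 by (simp add: alt_count_def alternating_def alt_break_def)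
  next
    case 3
    define B where "B = C - {Max C}"
    define n where "n = card B"
    have "finite B" using less.prems by (simp add: B_def)
    have "card C = Suc n" "n \<ge> 1"
      using less.prems 3 by (auto simp: B_def n_def card_Diff_singleton_if intro: Max_in)
    have "alt_count p C = (\<Sum>L\<in>Pow B.
        of_bool (even (card L + 1 + p)) * (alt_count p L * alt_count (p + card L + 1) (B - L)))"
      using alt_count_split_max[OF less.prems 3] by (simp add: B_def)
    also have "\<dots> = (\<Sum>L\<in>Pow B.
        of_bool (even (card L + 1 + p)) * (euler_num (card L) * euler_num (n - card L)))"
      using \<open>card C = Suc n\<close> \<open>finite B\<close>
      by (intro sum.cong refl) (simp add: less.hyps card_mono le_imp_less_Suc finite_subset
          card_Diff_subset n_def)
    also have "\<dots> = (\<Sum>i=0..n. real (n choose i) *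
        (of_bool (even (i + 1 + p)) * euler_num i * euler_num (n - i)))"
      unfolding n_def by (subst sum_Pow_by_card[OF \<open>finite B\<close>]) (simp add: mult.assoc)
    also have "\<dots> = euler_num (card C)"
      using euler_parity_convolution \<open>n \<ge> 1\<close> \<open>card C = Suc n\<close> by simp
    finally show ?thesis .
  qed
qed

definition sieve_coeff :: "nat \<Rightarrow> nat \<Rightarrow> real" where
  "sieve_coeff m k = of_bool (m dvd (k - 1)) - of_bool (m dvd k)"

fun sieve_weight :: "nat \<Rightarrow> nat \<Rightarrow> nat list \<Rightarrow> real" where
  "sieve_weight m p [] = 1"
| "sieve_weight m p (x # xs) = (\<Sum>k\<in>{1..length (x # xs)}.
     of_bool (alternating p (take k (x # xs))) * sieve_coeff m k * sieve_weight m (p + k) (drop k (x # xs)))"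

lemma sieve_weight_unfold:
  "xs \<noteq> [] \<Longrightarrow> sieve_weight m p xs = (\<Sum>k\<in>{1..length xs}.
     of_bool (alternating p (take k xs)) * sieve_coeff m k * sieve_weight m (p + k) (drop k xs))"
  by (cases xs) (simp_all del: length_Cons)

(* Every window of m consecutive entries that starts after position k, i.e. entries t .. t+m-1
   with t > k, contains a break between two of its entries. *)
definition windows_broken :: "nat \<Rightarrow> nat \<Rightarrow> nat list \<Rightarrow> nat \<Rightarrow> bool" where
  "windows_broken m p xs k \<longleftrightarrow> (\<forall>t. k < t \<and> t + m - 1 \<le> length xs \<longrightarrow>
     (\<exists>j. t \<le> j \<and> j < t + m - 1 \<and> alt_break p xs j))"

lemma windows_broken_drop:
  assumes "k \<le> length xs" "m > 0"
  shows "windows_broken m (p + k) (drop k xs) 0 \<longleftrightarrow> windows_broken m p xs k"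
proof
  assume broken: "windows_broken m (p + k) (drop k xs) 0"
  show "windows_broken m p xs k" unfolding windows_broken_def
  proof (intro allI impI)
    fix t assume t: "k < t \<and> t + m - 1 \<le> length xs"
    hence "0 < t - k \<and> t - k + m - 1 \<le> length (drop k xs)" using assms by auto
    then obtain j where "t - k \<le> j" "j < t - k + m - 1" "alt_break (p + k) (drop k xs) j"
      using broken unfolding windows_broken_def by blast
    thus "\<exists>j. t \<le> j \<and> j < t + m - 1 \<and> alt_break p xs j"
      using t by (intro exI[of _ "j + k"]) (auto simp: alt_break_drop)
  qed
next
  assume broken: "windows_broken m p xs k"
  show "windows_broken m (p + k) (drop k xs) 0" unfolding windows_broken_def
  proof (intro allI impI)
    fix t assume t: "0 < t \<and> t + m - 1 \<le> length (drop k xs)"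
    hence "k < t + k \<and> t + k + m - 1 \<le> length xs" using assms by auto
    then obtain j where j: "t + k \<le> j" "j < t + k + m - 1" "alt_break p xs j"
      using broken unfolding windows_broken_def by blast
    hence "alt_break (p + k) (drop k xs) (j - k)"
      using t by (auto simp: alt_break_drop)
    thus "\<exists>j. t \<le> j \<and> j < t + m - 1 \<and> alt_break (p + k) (drop k xs) j"
      using j by (intro exI[of _ "j - k"]) auto
  qed
qed

lemma sieve_coeff_window_sum:
  assumes "L \<ge> 1" "m > 0"
  shows "(\<Sum>k\<in>{1..L}. of_bool (L - k < m) * sieve_coeff m k) = of_bool (L < m)"
proof -
  define a where "a = (if L < m then 1 else L + 1 - m)"
  have "(\<Sum>k\<in>{1..L}. of_bool (L - k < m) * sieve_coeff m k) = (\<Sum>k\<in>{a..L}. sieve_coeff m k)"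
    using assms by (intro sum.mono_neutral_cong_right) (auto simp: a_def split: if_splits)
  also have "\<dots> = - (\<Sum>k\<in>{Suc (a - 1)..L}. of_bool (m dvd k) - of_bool (m dvd (k - 1)))"
    using assms by (simp add: a_def sieve_coeff_def sum_negf[symmetric])
  also have "\<dots> = of_bool (m dvd (a - 1)) - of_bool (m dvd L)"
    using assms by (subst sum_telescope'') (auto simp: a_def)
  also have "\<dots> = of_bool (L < m)"
    using assms by (auto simp: a_def dvd_minus_self dest: dvd_imp_le)
  finally show ?thesis .
qed

definition first_run_end :: "nat \<Rightarrow> nat list \<Rightarrow> nat \<Rightarrow> bool" where
  "first_run_end p xs L \<longleftrightarrow> 1 \<le> L \<and> L \<le> length xs \<and>
     (\<forall>j. 1 \<le> j \<and> j < L \<longrightarrow> \<not> alt_break p xs j) \<and> (L < length xs \<longrightarrow> alt_break p xs L)"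

lemma first_run_end_exists:
  assumes "xs \<noteq> []"
  obtains L where "first_run_end p xs L"
proof
  let ?P = "\<lambda>k. 1 \<le> k \<and> (k = length xs \<or> alt_break p xs k)"
  have "1 \<le> length xs" using assms by (simp add: Suc_le_eq)
  have "?P (Least ?P)"
    by (rule LeastI[where k = "length xs"]) (use \<open>1 \<le> length xs\<close> in simp)
  moreover have "Least ?P \<le> length xs"
    by (rule Least_le) (use \<open>1 \<le> length xs\<close> in simp)
  moreover have "\<not> alt_break p xs j" if "1 \<le> j" "j < Least ?P" for j
    using not_less_Least[OF that(2)] that(1) alt_break_bounds[of p xs j] by auto
  ultimately show "first_run_end p xs (Least ?P)"
    unfolding first_run_end_def by auto
qed

lemma alternating_take_iff:
  assumes "first_run_end p xs L" "k \<le> length xs"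
  shows "alternating p (take k xs) \<longleftrightarrow> k \<le> L"
proof
  assume alt: "alternating p (take k xs)"
  show "k \<le> L"
  proof (rule ccontr)
    assume "\<not> k \<le> L"
    hence "alt_break p (take k xs) L"
      using assms by (simp add: alt_break_take first_run_end_def)
    thus False using alt by (simp add: alternating_def)
  qed
next
  assume "k \<le> L"
  show "alternating p (take k xs)" unfolding alternating_def alt_break_take
  proof (intro allI notI)
    fix i assume "i < k \<and> alt_break p xs i"
    thus False
      using assms(1) alt_break_bounds[of p xs i] \<open>k \<le> L\<close> by (auto simp: first_run_end_def)
  qed
qed

(* Relative to the end L of the first maximal alternating block, a window starting at or before L
   is broken iff it reaches past L; so the windows after k are broken iff the block after k is
   short and the windows after L are broken. *)
lemma windows_broken_first_run:
  assumes "first_run_end p xs L" "m > 0" "k \<le> L"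
  shows "windows_broken m p xs k \<longleftrightarrow> L - k < m \<and> (L < length xs \<longrightarrow> windows_broken m p xs L)"
proof -
  have L: "L \<le> length xs" "\<And>j. 1 \<le> j \<Longrightarrow> j < L \<Longrightarrow> \<not> alt_break p xs j"
      "L < length xs \<Longrightarrow> alt_break p xs L"
    using assms(1) by (simp_all add: first_run_end_def)
  show ?thesis
  proof
    assume broken: "windows_broken m p xs k"
    have "L - k < m"
    proof (rule ccontr)
      assume "\<not> L - k < m"
      hence "k < k + 1 \<and> k + 1 + m - 1 \<le> length xs" using L(1) assms(3) by simp
      then obtain j where "k + 1 \<le> j" "j < k + 1 + m - 1" "alt_break p xs j"
        using broken[unfolded windows_broken_def, rule_format, of "k + 1"] by blast
      thus False using L(2) \<open>\<not> L - k < m\<close> by simp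
    qed
    moreover have "windows_broken m p xs L"
      using broken assms(3) unfolding windows_broken_def by simp
    ultimately show "L - k < m \<and> (L < length xs \<longrightarrow> windows_broken m p xs L)" by simp
  next
    assume short: "L - k < m \<and> (L < length xs \<longrightarrow> windows_broken m p xs L)"
    show "windows_broken m p xs k" unfolding windows_broken_def
    proof (intro allI impI)
      fix t assume t: "k < t \<and> t + m - 1 \<le> length xs"
      show "\<exists>j. t \<le> j \<and> j < t + m - 1 \<and> alt_break p xs j"
      proof (cases "L < t")
        case True
        hence "L < length xs" using t assms(2) by linarith
        hence "windows_broken m p xs L" using short by blast
        thus ?thesis using True t unfolding windows_broken_def by blast
      next
        case False
        have "L - k < m" using short by blast
        hence "L < t + m - 1" using t by linarith
        moreover from this have "L < length xs" using t by linarith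
        ultimately show ?thesis using L(3) False by (intro exI[of _ L]) simp
      qed
    qed
  qed
qed

(* Only blocks inside the first maximal alternating block contribute, and their coefficients
   telescope. *)
theorem sieve_weight_eq:
  assumes "m > 0"
  shows "sieve_weight m p xs = of_bool (windows_broken m p xs 0)"
proof (induction "length xs" arbitrary: xs p rule: less_induct)
  case less
  show ?case
  proof (cases "xs = []")
    case True
    thus ?thesis using assms by (auto simp: windows_broken_def)
  next
    case False
    then obtain L where L: "first_run_end p xs L" by (rule first_run_end_exists)
    hence "1 \<le> L" "L \<le> length xs" by (simp_all add: first_run_end_def)
    define later where "later = (L < length xs \<longrightarrow> windows_broken m p xs L)"
    have first_run: "windows_broken m p xs k \<longleftrightarrow> L - k < m \<and> later" if "k \<le> L" for k
      using windows_broken_first_run[OF L assms that] by (simp add: later_def)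
    have rest: "sieve_weight m (p + k) (drop k xs) = of_bool (windows_broken m p xs k)"
      if "1 \<le> k" "k \<le> length xs" for k
    proof -
      have "length (drop k xs) < length xs" using that False by simp
      thus ?thesis using less.hyps windows_broken_drop[of k xs m p] that assms by simp
    qed
    have "sieve_weight m p xs = (\<Sum>k\<in>{1..length xs}.
        of_bool (k \<le> L) * sieve_coeff m k * of_bool (windows_broken m p xs k))"
      unfolding sieve_weight_unfold[OF False]
      by (intro sum.cong refl) (simp add: alternating_take_iff[OF L] rest)
    also have "\<dots> = (\<Sum>k\<in>{1..L}. sieve_coeff m k * of_bool (windows_broken m p xs k))"
      using \<open>L \<le> length xs\<close> by (intro sum.mono_neutral_cong_right) auto
    also have "\<dots> = (\<Sum>k\<in>{1..L}. of_bool (L - k < m) * sieve_coeff m k) * of_bool later"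
      unfolding sum_distrib_right by (intro sum.cong refl) (simp add: first_run)
    also have "\<dots> = of_bool (windows_broken m p xs 0)"
      using first_run[of 0] by (simp only: sieve_coeff_window_sum[OF \<open>1 \<le> L\<close> assms]) simp
    finally show ?thesis .
  qed
qed

definition run_denominator :: "nat \<Rightarrow> real fps" where
  "run_denominator m = Abs_fps (\<lambda>k.
      (if m dvd k then euler_num k / fact k else 0)
      - (if k \<ge> 1 \<and> m dvd (k - 1) then euler_num k / fact k else 0))"

lemma run_denominator_nth_0 [simp]: "run_denominator m $ 0 = 1"
  by (simp add: run_denominator_def euler_num_0)

lemma run_denominator_nth:
  "k \<ge> 1 \<Longrightarrow> run_denominator m $ k = - (sieve_coeff m k * (euler_num k / fact k))"
  by (simp add: run_denominator_def sieve_coeff_def)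

(* Since D_m has constant term 1, the coefficients of 1/D_m satisfy this recurrence. *)
lemma inverse_run_denominator_nth:
  assumes "n \<ge> 1"
  shows "inverse (run_denominator m) $ n =
    (\<Sum>k=1..n. sieve_coeff m k * (euler_num k / fact k) * inverse (run_denominator m) $ (n - k))"
proof -
  let ?D = "run_denominator m"
  have "(?D * inverse ?D) $ n = 0"
    using assms by (simp add: inverse_mult_eq_1')
  hence "?D $ 0 * inverse ?D $ n + (\<Sum>k=1..n. ?D $ k * inverse ?D $ (n - k)) = 0"
    by (simp add: fps_mult_nth sum.atLeast_Suc_atMost)
  thus ?thesis by (simp add: run_denominator_nth sum_negf)
qed

(* Summing over all arrangements of A with an alternating first block of length k, where the sum
   of h over the arrangements of each remaining (card A - k)-set is w: by Andre's theorem each of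
   the (card A choose k) possible first-block sets contributes E_k w. *)
lemma sum_alternating_prefix:
  assumes "finite A" "k \<le> card A"
    and suffix_sum: "\<And>D. D \<subseteq> A \<Longrightarrow> card D = card A - k \<Longrightarrow> (\<Sum>zs\<in>permutations_of_set D. h zs) = w"
  shows "(\<Sum>xs\<in>permutations_of_set A. of_bool (alternating p (take k xs)) * h (drop k xs)) =
    real (card A choose k) * euler_num k * w"
proof -
  have "(\<Sum>xs\<in>permutations_of_set A. of_bool (alternating p (take k xs)) * h (drop k xs)) =
      (\<Sum>C | C \<subseteq> A \<and> card C = k. \<Sum>ys\<in>permutations_of_set C. \<Sum>zs\<in>permutations_of_set (A - C).
        of_bool (alternating p ys) * h zs)"
    unfolding sum_permutations_split_prefix[OF assms(1,2)]
    by (intro sum.cong refl) (simp add: length_finite_permutations_of_set)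
  also have "\<dots> = (\<Sum>C | C \<subseteq> A \<and> card C = k. euler_num k * w)"
  proof (intro sum.cong refl)
    fix C assume C: "C \<in> {C. C \<subseteq> A \<and> card C = k}"
    hence "finite C" "card (A - C) = card A - k"
      using assms(1) by (auto simp: card_Diff_subset finite_subset)
    moreover have "(\<Sum>ys\<in>permutations_of_set C. \<Sum>zs\<in>permutations_of_set (A - C).
        of_bool (alternating p ys) * h zs) = alt_count p C * (\<Sum>zs\<in>permutations_of_set (A - C). h zs)"
      by (simp only: alt_count_def sum_product)
    ultimately show "(\<Sum>ys\<in>permutations_of_set C. \<Sum>zs\<in>permutations_of_set (A - C).
        of_bool (alternating p ys) * h zs) = euler_num k * w"
      using C suffix_sum[of "A - C"] alt_count_euler[of C p] by simp
  qed
  also have "\<dots> = real (card A choose k) * euler_num k * w"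
    by (simp add: n_subsets[OF assms(1)])
  finally show ?thesis .
qed

lemma sum_sieve_weight_unfold:
  assumes "card A = n" "n \<ge> 1"
  shows "(\<Sum>xs\<in>permutations_of_set A. sieve_weight m p xs) =
    (\<Sum>k=1..n. sieve_coeff m k * (\<Sum>xs\<in>permutations_of_set A.
      of_bool (alternating p (take k xs)) * sieve_weight m (p + k) (drop k xs)))"
proof -
  have "(\<Sum>xs\<in>permutations_of_set A. sieve_weight m p xs) =
      (\<Sum>xs\<in>permutations_of_set A. \<Sum>k=1..n. sieve_coeff m k *
        (of_bool (alternating p (take k xs)) * sieve_weight m (p + k) (drop k xs)))"
  proof (intro sum.cong refl)
    fix xs assume "xs \<in> permutations_of_set A"
    hence "length xs = n" using assms(1) by (simp add: length_finite_permutations_of_set)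
    moreover from this have "xs \<noteq> []" using assms(2) by auto
    ultimately show "sieve_weight m p xs = (\<Sum>k=1..n. sieve_coeff m k *
        (of_bool (alternating p (take k xs)) * sieve_weight m (p + k) (drop k xs)))"
      by (simp add: sieve_weight_unfold ac_simps)
  qed
  also have "\<dots> = (\<Sum>k=1..n. sieve_coeff m k * (\<Sum>xs\<in>permutations_of_set A.
      of_bool (alternating p (take k xs)) * sieve_weight m (p + k) (drop k xs)))"
    unfolding sum_distrib_left by (rule sum.swap)
  finally show ?thesis .
qed

(* The total sieve weight of the arrangements of an n-set is n! [x^n] (1/D_m): by induction on n,
   both sides satisfy the recurrence of inverse_run_denominator_nth. *)
theorem sum_sieve_weight:
  "finite A \<Longrightarrow> (\<Sum>xs\<in>permutations_of_set A. sieve_weight m p xs) =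
     fact (card A) * inverse (run_denominator m) $ card A"
proof (induction "card A" arbitrary: A p rule: less_induct)
  case less
  define n where "n = card A"
  let ?c = "inverse (run_denominator m)"
  show ?case
  proof (cases "n = 0")
    case True
    hence "A = {}" using less.prems by (simp add: n_def)
    thus ?thesis by simp
  next
    case False
    have suffix_sum: "(\<Sum>zs\<in>permutations_of_set D. sieve_weight m (p + k) zs) = fact (n - k) * ?c $ (n - k)"
      if "D \<subseteq> A" "card D = n - k" "1 \<le> k" for D k
    proof -
      have "card D < card A" using that False by (simp add: n_def)
      thus ?thesis using less.hyps[of D "p + k"] less.prems that by (simp add: n_def finite_subset)
    qed
    have "(\<Sum>xs\<in>permutations_of_set A. sieve_weight m p xs) =
        (\<Sum>k=1..n. sieve_coeff m k * (\<Sum>xs\<in>permutations_of_set A.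
          of_bool (alternating p (take k xs)) * sieve_weight m (p + k) (drop k xs)))"
      using False by (intro sum_sieve_weight_unfold) (simp_all add: n_def)
    also have "\<dots> =
        (\<Sum>k=1..n. sieve_coeff m k * (real (n choose k) * euler_num k * (fact (n - k) * ?c $ (n - k))))"
    proof (intro sum.cong refl arg_cong2[where f = "(*)"])
      fix k assume "k \<in> {1..n}"
      thus "(\<Sum>xs\<in>permutations_of_set A. of_bool (alternating p (take k xs)) * sieve_weight m (p + k) (drop k xs))
          = real (n choose k) * euler_num k * (fact (n - k) * ?c $ (n - k))"
        unfolding n_def using less.prems suffix_sum
        by (intro sum_alternating_prefix) (auto simp: n_def)
    qed
    also have "\<dots> = fact n * (\<Sum>k=1..n. sieve_coeff m k * (euler_num k / fact k) * ?c $ (n - k))"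
      unfolding sum_distrib_left by (intro sum.cong refl) (simp add: binomial_fact field_simps)
    also have "\<dots> = fact n * ?c $ n"
      using False by (simp add: inverse_run_denominator_nth)
    finally show ?thesis by (simp add: n_def)
  qed
qed

lemma alt_desc_eq_alt_break: "alt_desc xs i \<longleftrightarrow> alt_break 0 xs i"
  by (simp add: alt_desc_def alt_break_def)

(* Every descent-free block lies inside an alternating run: extend it to the left as far as
   possible, then to the right as far as possible. *)
lemma alt_run_containing:
  assumes "desc_free_block xs t u"
  shows "\<exists>a b. alt_run xs a b \<and> a \<le> t \<and> u \<le> b"
proof -
  define a where "a = (LEAST a. desc_free_block xs a u)"
  have a: "desc_free_block xs a u" "a \<le> t"
    unfolding a_def using assms by (auto intro: LeastI Least_le)
  have bounded: "desc_free_block xs a b \<Longrightarrow> b \<le> length xs" for b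
    by (simp add: desc_free_block_def)
  define b where "b = (GREATEST b. desc_free_block xs a b)"
  have b: "desc_free_block xs a b" "u \<le> b"
    unfolding b_def using a(1) bounded by (auto intro: GreatestI_nat Greatest_le_nat)
  have "alt_run xs a b" unfolding alt_run_def
  proof (rule conjI[OF b(1)], intro allI impI)
    fix a' b' assume ext: "desc_free_block xs a' b' \<and> a' \<le> a \<and> b \<le> b'"
    hence "desc_free_block xs a' u" using a(1) b(2) by (auto simp: desc_free_block_def)
    hence "a' = a" using ext unfolding a_def by (simp add: Least_le antisym)
    moreover have "b' \<le> b" using ext \<open>a' = a\<close> bounded unfolding b_def by (auto intro: Greatest_le_nat)
    ultimately show "a' = a \<and> b' = b" using ext by simp
  qed
  thus ?thesis using a b by blast
qed

theorem all_runs_short_iff: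
  assumes "m > 0"
  shows "(\<forall>a b. alt_run xs a b \<longrightarrow> b - a + 1 < m) \<longleftrightarrow> windows_broken m 0 xs 0"
proof
  assume short: "\<forall>a b. alt_run xs a b \<longrightarrow> b - a + 1 < m"
  show "windows_broken m 0 xs 0" unfolding windows_broken_def
  proof (intro allI impI)
    fix t assume t: "0 < t \<and> t + m - 1 \<le> length xs"
    show "\<exists>j. t \<le> j \<and> j < t + m - 1 \<and> alt_break 0 xs j"
    proof (rule ccontr)
      assume "\<not> ?thesis"
      hence "desc_free_block xs t (t + m - 1)"
        using t assms by (auto simp: desc_free_block_def alt_desc_eq_alt_break)
      then obtain a b where "alt_run xs a b" "a \<le> t" "t + m - 1 \<le> b"
        using alt_run_containing by blast
      thus False using short assms by fastforce
    qed
  qed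
next
  assume broken: "windows_broken m 0 xs 0"
  show "\<forall>a b. alt_run xs a b \<longrightarrow> b - a + 1 < m"
  proof (intro allI impI)
    fix a b assume "alt_run xs a b"
    hence run: "desc_free_block xs a b" by (simp add: alt_run_def)
    show "b - a + 1 < m"
    proof (rule ccontr)
      assume "\<not> b - a + 1 < m"
      hence "0 < a \<and> a + m - 1 \<le> length xs" "a + m - 1 \<le> b"
        using run assms by (auto simp: desc_free_block_def)
      then obtain j where "a \<le> j" "j < a + m - 1" "alt_break 0 xs j"
        using broken unfolding windows_broken_def by blast
      thus False using run \<open>a + m - 1 \<le> b\<close>
        by (auto simp: desc_free_block_def alt_desc_eq_alt_break)
    qed
  qed
qed

(* a_m(n) = n! [x^n] (1/D_m): count through the sieve weight. *)
lemma a_count_eq: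
  assumes "m > 0"
  shows "real (a_count m n) = fact n * inverse (run_denominator m) $ n"
proof -
  have "{xs. distinct xs \<and> set xs = {1..n} \<and> (\<forall>a b. alt_run xs a b \<longrightarrow> b - a + 1 < m)} =
      {xs \<in> permutations_of_set {1..n}. windows_broken m 0 xs 0}"
    using all_runs_short_iff[OF assms] by (auto simp: permutations_of_set_def)
  hence "real (a_count m n) = (\<Sum>xs\<in>permutations_of_set {1..n}. of_bool (windows_broken m 0 xs 0))"
    by (simp add: a_count_def Collect_conj_eq)
  also have "\<dots> = (\<Sum>xs\<in>permutations_of_set {1..n}. sieve_weight m 0 xs)"
    by (simp add: sieve_weight_eq[OF assms])
  also have "\<dots> = fact n * inverse (run_denominator m) $ n"
    using sum_sieve_weight[of "{1..n}" m 0] by simp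
  finally show ?thesis .
qed

theorem mainTheorem12:
  fixes m :: nat
  assumes "m > 0"
  shows "Abs_fps (\<lambda>n. real (a_count m n) / fact n) =
    inverse (Abs_fps (\<lambda>k.
      (if m dvd k then euler_num k / fact k else 0)
      - (if k \<ge> 1 \<and> m dvd (k - 1) then euler_num k / fact k else 0)))"
proof -
  have "Abs_fps (\<lambda>n. real (a_count m n) / fact n) = inverse (run_denominator m)"
    by (intro fps_ext) (simp add: a_count_eq[OF assms])
  thus ?thesis by (simp add: run_denominator_def)
qed

end
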